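(* Let $(\mathcal{D},\Psi)$ be a braided monoidal category, let $(A,m,u)$ be an algebra in $\mathcal{D}$, let $S$ be an object of $\mathcal{D}$ and $\phi\colon S\to A$ a morphism in $\mathcal{D}$. Then the left centralizer $\operatorname{Cent}^l_A(S)\to A$ admits the structure of an algebra in $\mathcal{D}$, unique up to unique isomorphism of algebras, such that the structure morphism $\operatorname{Cent}^l_A(S)\to A$ is a morphism of algebras in $\mathcal{D}$.
   Context: All categories are $\Bbbk$-linear abelian monoidal categories over a field $\Bbbk$ (associativity and unit isomorphisms suppressed). The left centralizer $\operatorname{Cent}^l_A(S)\to A$ is defined as the terminal object in the category whose objects are pairs $(C,\gamma)$ with $C\in\mathcal{D}$ and $\gamma\colon C\to A$ a morphism in $\mathcal{D}$ satisfying $m(\gamma\otimes\phi)=m(\phi\otimes\gamma)\Psi_{C,S}$ as morphisms $C\otimes S\to A$, and whose morphisms $(C,\gamma)\to(C',\gamma')$ are morphisms $f\colon C\to C'$ in $\mathcal{D}$ with $\gamma' f=\gamma$. *)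

theory Defs
  imports Main
begin

text \<open>Associativity and unit
  isomorphisms are suppressed (strict monoidal structure), as in the paper.\<close>

record ('o, 'a) bmcat =
  Arr   :: "'a set"
  dom   :: "'a \<Rightarrow> 'o"
  cod   :: "'a \<Rightarrow> 'o"
  comp  :: "'a \<Rightarrow> 'a \<Rightarrow> 'a"      (* comp D g f = g \<circ> f *)
  idm   :: "'o \<Rightarrow> 'a"
  tob   :: "'o \<Rightarrow> 'o \<Rightarrow> 'o"
  tar   :: "'a \<Rightarrow> 'a \<Rightarrow> 'a"
  unit  :: "'o"
  braid :: "'o \<Rightarrow> 'o \<Rightarrow> 'a"

definition hom :: "('o, 'a, 'x) bmcat_scheme \<Rightarrow> 'o \<Rightarrow> 'o \<Rightarrow> 'a set" where
  "hom D X Y = {f \<in> Arr D. dom D f = X \<and> cod D f = Y}"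

definition iso_mor :: "('o, 'a, 'x) bmcat_scheme \<Rightarrow> 'a \<Rightarrow> bool" where
  "iso_mor D f \<longleftrightarrow> f \<in> Arr D \<and> (\<exists>g \<in> hom D (cod D f) (dom D f).
      comp D g f = idm D (dom D f) \<and> comp D f g = idm D (cod D f))"

definition braided_monoidal_cat :: "('o, 'a, 'x) bmcat_scheme \<Rightarrow> bool" where
  "braided_monoidal_cat D \<longleftrightarrow>
    \<comment> \<open>category\<close>
    (\<forall>X. idm D X \<in> hom D X X) \<and>
    (\<forall>X Y Z f g. f \<in> hom D X Y \<longrightarrow> g \<in> hom D Y Z \<longrightarrow> comp D g f \<in> hom D X Z) \<and>
    (\<forall>X Y f. f \<in> hom D X Y \<longrightarrow> comp D (idm D Y) f = f \<and> comp D f (idm D X) = f) \<and>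
    (\<forall>W X Y Z f g h. f \<in> hom D W X \<longrightarrow> g \<in> hom D X Y \<longrightarrow> h \<in> hom D Y Z \<longrightarrow>
        comp D h (comp D g f) = comp D (comp D h g) f) \<and>
    \<comment> \<open>tensor bifunctor\<close>
    (\<forall>X Y X' Y' f g. f \<in> hom D X Y \<longrightarrow> g \<in> hom D X' Y' \<longrightarrow>
        tar D f g \<in> hom D (tob D X X') (tob D Y Y')) \<and>
    (\<forall>X Y. tar D (idm D X) (idm D Y) = idm D (tob D X Y)) \<and>
    (\<forall>X Y Z X' Y' Z' f g f' g'. f \<in> hom D X Y \<longrightarrow> g \<in> hom D Y Z \<longrightarrow>
        f' \<in> hom D X' Y' \<longrightarrow> g' \<in> hom D Y' Z' \<longrightarrow>
        tar D (comp D g f) (comp D g' f') = comp D (tar D g g') (tar D f f')) \<and>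
    \<comment> \<open>strictness (associativity and unit constraints suppressed)\<close>
    (\<forall>X Y Z. tob D (tob D X Y) Z = tob D X (tob D Y Z)) \<and>
    (\<forall>X. tob D (unit D) X = X \<and> tob D X (unit D) = X) \<and>
    (\<forall>f g h. f \<in> Arr D \<longrightarrow> g \<in> Arr D \<longrightarrow> h \<in> Arr D \<longrightarrow>
        tar D (tar D f g) h = tar D f (tar D g h)) \<and>
    (\<forall>f. f \<in> Arr D \<longrightarrow> tar D (idm D (unit D)) f = f \<and> tar D f (idm D (unit D)) = f) \<and>
    \<comment> \<open>braiding: natural isomorphism satisfying the hexagon axioms\<close>
    (\<forall>X Y. braid D X Y \<in> hom D (tob D X Y) (tob D Y X) \<and> iso_mor D (braid D X Y)) \<and>
    (\<forall>X Y X' Y' f g. f \<in> hom D X Y \<longrightarrow> g \<in> hom D X' Y' \<longrightarrow>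
        comp D (braid D Y Y') (tar D f g) = comp D (tar D g f) (braid D X X')) \<and>
    (\<forall>X Y Z. braid D X (tob D Y Z) =
        comp D (tar D (idm D Y) (braid D X Z)) (tar D (braid D X Y) (idm D Z))) \<and>
    (\<forall>X Y Z. braid D (tob D X Y) Z =
        comp D (tar D (braid D X Z) (idm D Y)) (tar D (idm D X) (braid D Y Z)))"

definition algebra :: "('o, 'a, 'x) bmcat_scheme \<Rightarrow> 'o \<Rightarrow> 'a \<Rightarrow> 'a \<Rightarrow> bool" where
  "algebra D A m u \<longleftrightarrow>
    m \<in> hom D (tob D A A) A \<and> u \<in> hom D (unit D) A \<and>
    comp D m (tar D m (idm D A)) = comp D m (tar D (idm D A) m) \<and>
    comp D m (tar D u (idm D A)) = idm D A \<and>
    comp D m (tar D (idm D A) u) = idm D A"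

definition algebra_mor ::
  "('o, 'a, 'x) bmcat_scheme \<Rightarrow> 'o \<Rightarrow> 'a \<Rightarrow> 'a \<Rightarrow> 'o \<Rightarrow> 'a \<Rightarrow> 'a \<Rightarrow> 'a \<Rightarrow> bool" where
  "algebra_mor D B mB uB A mA uA f \<longleftrightarrow>
    f \<in> hom D B A \<and>
    comp D f mB = comp D mA (tar D f f) \<and>
    comp D f uB = uA"

definition centralizes ::
  "('o, 'a, 'x) bmcat_scheme \<Rightarrow> 'a \<Rightarrow> 'o \<Rightarrow> 'a \<Rightarrow> 'o \<Rightarrow> 'a \<Rightarrow> bool" where
  "centralizes D m S \<phi> C \<gamma> \<longleftrightarrow>
    comp D m (tar D \<gamma> \<phi>) = comp D (comp D m (tar D \<phi> \<gamma>)) (braid D C S)"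

definition is_left_centralizer ::
  "('o, 'a, 'x) bmcat_scheme \<Rightarrow> 'o \<Rightarrow> 'a \<Rightarrow> 'o \<Rightarrow> 'a \<Rightarrow> 'o \<Rightarrow> 'a \<Rightarrow> bool" where
  "is_left_centralizer D A m S \<phi> Z \<zeta> \<longleftrightarrow>
    \<zeta> \<in> hom D Z A \<and> centralizes D m S \<phi> Z \<zeta> \<and>
    (\<forall>C \<gamma>. \<gamma> \<in> hom D C A \<longrightarrow> centralizes D m S \<phi> C \<gamma> \<longrightarrow>
        (\<exists>!f. f \<in> hom D C Z \<and> comp D \<zeta> f = \<gamma>))"

end

(* The structure morphism \<zeta> : Z \<rightarrow> A of the left centralizer is a monomorphism:
   if \<zeta> g = \<zeta> h, then g and h both factor \<zeta> g, which again centralizes \<phi>, so g = h by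
   the uniqueness part of the universal property.  Centralizing morphisms are closed under
   the product m (\<gamma> \<otimes> \<delta>), by associativity of m and the hexagon identity
   \<Psi>(C \<otimes> C', S) = (\<Psi>(C, S) \<otimes> 1)(1 \<otimes> \<Psi>(C', S)), and u centralizes because \<Psi>(1, S) = 1.
   So m (\<zeta> \<otimes> \<zeta>) and u factor through \<zeta>, giving mZ and uZ.  As \<zeta> is monic, the
   algebra laws of (Z, mZ, uZ) are inherited from A, and any two algebra structures making
   \<zeta> an algebra morphism coincide, so the identity is the only comparison isomorphism. *)

theory Submission
  imports Defs
begin

definition monic :: "('o, 'a, 'x) bmcat_scheme \<Rightarrow> 'a \<Rightarrow> bool" where
  "monic D f \<longleftrightarrow> (\<forall>X g h. g \<in> hom D X (dom D f) \<longrightarrow> h \<in> hom D X (dom D f) \<longrightarrow>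
                        comp D f g = comp D f h \<longrightarrow> g = h)"

lemma monicD:
  assumes "monic D \<zeta>" "g \<in> hom D X (dom D \<zeta>)" "h \<in> hom D X (dom D \<zeta>)"
    and "comp D \<zeta> g = comp D \<zeta> h"
  shows "g = h"
  using assms unfolding monic_def by blast

locale braided_strict_monoidal_cat =
  fixes D :: "('o, 'a) bmcat"
  assumes braided_monoidal: "braided_monoidal_cat D"
begin

lemma arr_idm [simp]: "idm D X \<in> Arr D" "dom D (idm D X) = X" "cod D (idm D X) = X"
  using braided_monoidal by (simp_all add: braided_monoidal_cat_def hom_def)

lemma arr_comp [simp]:
  assumes "f \<in> Arr D" "g \<in> Arr D" "cod D f = dom D g"
  shows "comp D g f \<in> Arr D" "dom D (comp D g f) = dom D f" "cod D (comp D g f) = cod D g"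
proof -
  have "f \<in> hom D (dom D f) (cod D f)" "g \<in> hom D (cod D f) (cod D g)"
    using assms by (simp_all add: hom_def)
  then have "comp D g f \<in> hom D (dom D f) (cod D g)"
    using braided_monoidal by (simp add: braided_monoidal_cat_def)
  then show "comp D g f \<in> Arr D" "dom D (comp D g f) = dom D f" "cod D (comp D g f) = cod D g"
    by (simp_all add: hom_def)
qed

lemma arr_tar [simp]:
  assumes "f \<in> Arr D" "g \<in> Arr D"
  shows "tar D f g \<in> Arr D" "dom D (tar D f g) = tob D (dom D f) (dom D g)"
    "cod D (tar D f g) = tob D (cod D f) (cod D g)"
proof -
  have "f \<in> hom D (dom D f) (cod D f)" "g \<in> hom D (dom D g) (cod D g)"
    using assms by (simp_all add: hom_def)
  then have "tar D f g \<in> hom D (tob D (dom D f) (dom D g)) (tob D (cod D f) (cod D g))"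
    using braided_monoidal by (simp add: braided_monoidal_cat_def)
  then show "tar D f g \<in> Arr D" "dom D (tar D f g) = tob D (dom D f) (dom D g)"
    "cod D (tar D f g) = tob D (cod D f) (cod D g)"
    by (simp_all add: hom_def)
qed

lemma arr_braid [simp]:
  "braid D X Y \<in> Arr D" "dom D (braid D X Y) = tob D X Y" "cod D (braid D X Y) = tob D Y X"
  using braided_monoidal by (simp_all add: braided_monoidal_cat_def hom_def)

lemma comp_assoc [simp]:
  assumes "f \<in> Arr D" "g \<in> Arr D" "h \<in> Arr D" "cod D f = dom D g" "cod D g = dom D h"
  shows "comp D (comp D h g) f = comp D h (comp D g f)"
proof -
  have "f \<in> hom D (dom D f) (cod D f)" "g \<in> hom D (cod D f) (cod D g)"
    "h \<in> hom D (cod D g) (cod D h)"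
    using assms by (simp_all add: hom_def)
  then show ?thesis
    using braided_monoidal by (simp add: braided_monoidal_cat_def)
qed

lemma comp_idm_left [simp]:
  assumes "f \<in> Arr D" "cod D f = X"
  shows "comp D (idm D X) f = f"
proof -
  have "f \<in> hom D (dom D f) X"
    using assms by (simp add: hom_def)
  then show ?thesis
    using braided_monoidal by (simp add: braided_monoidal_cat_def)
qed

lemma comp_idm_right [simp]:
  assumes "f \<in> Arr D" "dom D f = X"
  shows "comp D f (idm D X) = f"
proof -
  have "f \<in> hom D X (cod D f)"
    using assms by (simp add: hom_def)
  then show ?thesis
    using braided_monoidal by (simp add: braided_monoidal_cat_def)
qed

lemma interchange:
  assumes "f \<in> Arr D" "g \<in> Arr D" "cod D f = dom D g"
    and "f' \<in> Arr D" "g' \<in> Arr D" "cod D f' = dom D g'"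
  shows "tar D (comp D g f) (comp D g' f') = comp D (tar D g g') (tar D f f')"
proof -
  have "f \<in> hom D (dom D f) (cod D f)" "g \<in> hom D (cod D f) (cod D g)"
    "f' \<in> hom D (dom D f') (cod D f')" "g' \<in> hom D (cod D f') (cod D g')"
    using assms by (simp_all add: hom_def)
  then show ?thesis
    using braided_monoidal by (simp add: braided_monoidal_cat_def)
qed

lemma braid_natural:
  assumes "f \<in> Arr D" "g \<in> Arr D"
  shows "comp D (braid D (cod D f) (cod D g)) (tar D f g) =
    comp D (tar D g f) (braid D (dom D f) (dom D g))"
proof -
  have "f \<in> hom D (dom D f) (cod D f)" "g \<in> hom D (dom D g) (cod D g)"
    using assms by (simp_all add: hom_def)
  then show ?thesis
    using braided_monoidal by (simp add: braided_monoidal_cat_def)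
qed

lemma tar_idm [simp]: "tar D (idm D X) (idm D Y) = idm D (tob D X Y)"
  using braided_monoidal by (simp add: braided_monoidal_cat_def)

lemma tob_assoc [simp]: "tob D (tob D X Y) Z = tob D X (tob D Y Z)"
  using braided_monoidal by (simp add: braided_monoidal_cat_def)

lemma tob_unit [simp]: "tob D (unit D) X = X" "tob D X (unit D) = X"
  using braided_monoidal by (simp_all add: braided_monoidal_cat_def)

lemma tar_assoc [simp]:
  "f \<in> Arr D \<Longrightarrow> g \<in> Arr D \<Longrightarrow> h \<in> Arr D \<Longrightarrow>
    tar D (tar D f g) h = tar D f (tar D g h)"
  using braided_monoidal by (simp add: braided_monoidal_cat_def)

lemma tar_idm_unit [simp]:
  "f \<in> Arr D \<Longrightarrow> tar D (idm D (unit D)) f = f"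
  "f \<in> Arr D \<Longrightarrow> tar D f (idm D (unit D)) = f"
  using braided_monoidal by (simp_all add: braided_monoidal_cat_def)

lemma iso_mor_braid: "iso_mor D (braid D X Y)"
  using braided_monoidal by (simp add: braided_monoidal_cat_def)

lemma braid_tob_left:
  "braid D (tob D X Y) Z = comp D (tar D (braid D X Z) (idm D Y)) (tar D (idm D X) (braid D Y Z))"
  using braided_monoidal by (simp add: braided_monoidal_cat_def)

lemma idempotent_iso_eq_idm:
  assumes "iso_mor D f" "cod D f = dom D f" "comp D f f = f"
  shows "f = idm D (dom D f)"
proof -
  obtain g where g: "g \<in> hom D (cod D f) (dom D f)" "comp D g f = idm D (dom D f)"
    using assms(1) unfolding iso_mor_def by blast
  have f: "f \<in> Arr D"
    using assms(1) by (simp add: iso_mor_def)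
  have "f = comp D (comp D g f) f"
    using f assms(2) by (simp add: g(2))
  also have "\<dots> = comp D g (comp D f f)"
    using f g(1) assms(2) by (simp add: hom_def)
  finally show ?thesis
    using assms(3) g(2) by simp
qed

lemma braid_unit_left [simp]: "braid D (unit D) X = idm D X"
proof -
  have "comp D (braid D (unit D) X) (braid D (unit D) X) = braid D (unit D) X"
    using braid_tob_left[of "unit D" "unit D" X] by simp
  then show ?thesis
    using idempotent_iso_eq_idm[OF iso_mor_braid[of "unit D" X]] by simp
qed

lemma comp_eq_precomp:
  assumes "comp D g f = comp D g' f'"
    and "f \<in> Arr D" "g \<in> Arr D" "cod D f = dom D g"
    and "f' \<in> Arr D" "g' \<in> Arr D" "cod D f' = dom D g'"
    and "h \<in> Arr D" "cod D h = dom D f" "cod D h = dom D f'"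
  shows "comp D g (comp D f h) = comp D g' (comp D f' h)"
proof -
  have "comp D g (comp D f h) = comp D (comp D g f) h"
    using assms(2-) by simp
  also have "\<dots> = comp D (comp D g' f') h"
    by (simp only: assms(1))
  also have "\<dots> = comp D g' (comp D f' h)"
    using assms(2-) by simp
  finally show ?thesis .
qed

lemma monic_comp_eq_self_imp_idm:
  assumes "monic D \<zeta>" "\<zeta> \<in> hom D Z A" "f \<in> hom D Z Z" "comp D \<zeta> f = \<zeta>"
  shows "f = idm D Z"
  using assms unfolding monic_def by (simp add: hom_def)

lemma algebra_structure_unique_along_monic:
  assumes "monic D \<zeta>"
    and "algebra D Z mZ uZ" "algebra_mor D Z mZ uZ A m u \<zeta>"
    and "algebra D Z mZ' uZ'" "algebra_mor D Z mZ' uZ' A m u \<zeta>"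
  shows "\<exists>!f. algebra_mor D Z mZ uZ Z mZ' uZ' f \<and> iso_mor D f \<and>
      comp D \<zeta> f = \<zeta>"
proof (rule ex1I)
  have "dom D \<zeta> = Z"
    using assms(3) by (simp add: algebra_mor_def hom_def)
  then have "mZ = mZ'" "uZ = uZ'"
    using assms by (auto simp: algebra_def algebra_mor_def intro: monicD)
  then show "algebra_mor D Z mZ uZ Z mZ' uZ' (idm D Z) \<and> iso_mor D (idm D Z) \<and>
      comp D \<zeta> (idm D Z) = \<zeta>"
    using assms(2,3) by (auto simp: algebra_def algebra_mor_def iso_mor_def hom_def)
next
  fix f
  assume "algebra_mor D Z mZ uZ Z mZ' uZ' f \<and> iso_mor D f \<and> comp D \<zeta> f = \<zeta>"
  then show "f = idm D Z"
    using assms(1,3) monic_comp_eq_self_imp_idm unfolding algebra_mor_def by blast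
qed

lemma centralizes_precomp:
  assumes "m \<in> hom D (tob D A A) A" "\<phi> \<in> hom D S A"
    and "\<gamma> \<in> hom D C A" "centralizes D m S \<phi> C \<gamma>" "f \<in> hom D C' C"
  shows "centralizes D m S \<phi> C' (comp D \<gamma> f)"
proof -
  have [simp]: "m \<in> Arr D" "dom D m = tob D A A" "cod D m = A"
    "\<phi> \<in> Arr D" "dom D \<phi> = S" "cod D \<phi> = A"
    "\<gamma> \<in> Arr D" "dom D \<gamma> = C" "cod D \<gamma> = A"
    "f \<in> Arr D" "dom D f = C'" "cod D f = C"
    using assms(1-3,5) by (simp_all add: hom_def)
  have "comp D m (tar D (comp D \<gamma> f) \<phi>) =
      comp D m (comp D (tar D \<gamma> \<phi>) (tar D f (idm D S)))"
    using interchange[of f \<gamma> "idm D S" \<phi>] by simp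
  also have "\<dots> =
      comp D m (comp D (tar D \<phi> \<gamma>) (comp D (braid D C S) (tar D f (idm D S))))"
    using comp_eq_precomp[of m "tar D \<gamma> \<phi>" m "comp D (tar D \<phi> \<gamma>) (braid D C S)"]
      assms(4) by (simp add: centralizes_def)
  also have "\<dots> =
      comp D m (comp D (tar D \<phi> \<gamma>) (comp D (tar D (idm D S) f) (braid D C' S)))"
    using braid_natural[of f "idm D S"] by simp
  also have "\<dots> = comp D m (comp D (tar D \<phi> (comp D \<gamma> f)) (braid D C' S))"
    using interchange[of "idm D S" \<phi> f \<gamma>] by simp
  finally show ?thesis
    by (simp add: centralizes_def)
qed

lemma left_centralizer_monic:
  assumes "m \<in> hom D (tob D A A) A" "\<phi> \<in> hom D S A"
    and "is_left_centralizer D A m S \<phi> Z \<zeta>"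
  shows "monic D \<zeta>"
  unfolding monic_def
proof (intro allI impI)
  fix X g h
  assume g: "g \<in> hom D X (dom D \<zeta>)" and h: "h \<in> hom D X (dom D \<zeta>)"
    and eq: "comp D \<zeta> g = comp D \<zeta> h"
  have \<zeta>: "\<zeta> \<in> hom D Z A" "centralizes D m S \<phi> Z \<zeta>"
    using assms(3) by (simp_all add: is_left_centralizer_def)
  have gZ: "g \<in> hom D X Z"
    using g \<zeta>(1) by (simp add: hom_def)
  have "comp D \<zeta> g \<in> hom D X A"
    using gZ \<zeta>(1) by (simp add: hom_def)
  moreover have "centralizes D m S \<phi> X (comp D \<zeta> g)"
    by (rule centralizes_precomp[OF assms(1,2) \<zeta> gZ])
  ultimately have "\<exists>!f. f \<in> hom D X Z \<and> comp D \<zeta> f = comp D \<zeta> g"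
    using assms(3) by (simp add: is_left_centralizer_def)
  then show "g = h"
    using g h eq \<zeta>(1) by (auto simp: hom_def)
qed

end

locale algebra_in = braided_strict_monoidal_cat +
  fixes A :: 'o and m u :: 'a
  assumes algebra: "algebra D A m u"
begin

lemma arr_mult [simp]: "m \<in> Arr D" "dom D m = tob D A A" "cod D m = A"
  using algebra by (simp_all add: algebra_def hom_def)

lemma arr_unit [simp]: "u \<in> Arr D" "dom D u = unit D" "cod D u = A"
  using algebra by (simp_all add: algebra_def hom_def)

lemma mult_assoc: "comp D m (tar D m (idm D A)) = comp D m (tar D (idm D A) m)"
  using algebra by (simp add: algebra_def)

lemma mult_unit_left: "comp D m (tar D u (idm D A)) = idm D A"
  using algebra by (simp add: algebra_def)

lemma mult_unit_right: "comp D m (tar D (idm D A) u) = idm D A"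
  using algebra by (simp add: algebra_def)

lemma mult_assoc_tar:
  assumes "f \<in> Arr D" "g \<in> Arr D" "h \<in> Arr D" "cod D f = A" "cod D g = A" "cod D h = A"
  shows "comp D m (tar D (comp D m (tar D f g)) h) = comp D m (tar D f (comp D m (tar D g h)))"
proof -
  have "comp D m (tar D (comp D m (tar D f g)) h) =
      comp D m (comp D (tar D m (idm D A)) (tar D f (tar D g h)))"
    using assms interchange[of "tar D f g" m h "idm D A"] by simp
  also have "\<dots> = comp D m (comp D (tar D (idm D A) m) (tar D f (tar D g h)))"
    using assms comp_eq_precomp[OF mult_assoc] by simp
  also have "\<dots> = comp D m (tar D f (comp D m (tar D g h)))"
    using assms interchange[of f "idm D A" "tar D g h" m] by simp
  finally show ?thesis .
qed

lemma mult_unit_left_tar: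
  assumes "f \<in> Arr D" "cod D f = A"
  shows "comp D m (tar D u f) = f"
proof -
  have "comp D m (tar D u f) = comp D (comp D m (tar D u (idm D A))) f"
    using assms interchange[of "idm D (unit D)" u f "idm D A"] by simp
  also have "\<dots> = f"
    using assms by (simp add: mult_unit_left)
  finally show ?thesis .
qed

lemma mult_unit_right_tar:
  assumes "f \<in> Arr D" "cod D f = A"
  shows "comp D m (tar D f u) = f"
proof -
  have "comp D m (tar D f u) = comp D (comp D m (tar D (idm D A) u)) f"
    using assms interchange[of f "idm D A" "idm D (unit D)" u] by simp
  also have "\<dots> = f"
    using assms by (simp add: mult_unit_right)
  finally show ?thesis .
qed

lemma algebra_if_monic_algebra_mor:
  assumes "monic D \<zeta>" "algebra_mor D Z mZ uZ A m u \<zeta>"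
    and "mZ \<in> hom D (tob D Z Z) Z" "uZ \<in> hom D (unit D) Z"
  shows "algebra D Z mZ uZ"
proof -
  have [simp]: "\<zeta> \<in> Arr D" "dom D \<zeta> = Z" "cod D \<zeta> = A"
    "mZ \<in> Arr D" "dom D mZ = tob D Z Z" "cod D mZ = Z"
    "uZ \<in> Arr D" "dom D uZ = unit D" "cod D uZ = Z"
    using assms(2-4) by (simp_all add: algebra_mor_def hom_def)
  have mult: "comp D \<zeta> mZ = comp D m (tar D \<zeta> \<zeta>)" and unit: "comp D \<zeta> uZ = u"
    using assms(2) by (simp_all add: algebra_mor_def)
  have mult_tar:
    "comp D \<zeta> (comp D mZ (tar D f g)) = comp D m (tar D (comp D \<zeta> f) (comp D \<zeta> g))"
    if "f \<in> Arr D" "g \<in> Arr D" "cod D f = Z" "cod D g = Z" for f g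
    using that comp_eq_precomp[OF mult, where h = "tar D f g"] interchange[of f \<zeta> g \<zeta>] by simp
  have cancel: "x = y"
    if "x \<in> hom D X Z" "y \<in> hom D X Z" "comp D \<zeta> x = comp D \<zeta> y" for X x y
    using monicD[OF assms(1)] that by simp
  have "comp D mZ (tar D mZ (idm D Z)) = comp D mZ (tar D (idm D Z) mZ)"
  proof (rule cancel)
    have "comp D \<zeta> (comp D mZ (tar D mZ (idm D Z))) =
        comp D m (tar D (comp D m (tar D \<zeta> \<zeta>)) \<zeta>)"
      by (simp add: mult_tar mult)
    also have "\<dots> = comp D m (tar D \<zeta> (comp D m (tar D \<zeta> \<zeta>)))"
      by (simp add: mult_assoc_tar)
    also have "\<dots> = comp D \<zeta> (comp D mZ (tar D (idm D Z) mZ))"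
      by (simp add: mult_tar mult)
    finally show "comp D \<zeta> (comp D mZ (tar D mZ (idm D Z))) =
        comp D \<zeta> (comp D mZ (tar D (idm D Z) mZ))" .
  qed (simp_all add: hom_def)
  moreover have "comp D mZ (tar D uZ (idm D Z)) = idm D Z"
    by (rule cancel) (simp_all add: hom_def mult_tar unit mult_unit_left_tar)
  moreover have "comp D mZ (tar D (idm D Z) uZ) = idm D Z"
    by (rule cancel) (simp_all add: hom_def mult_tar unit mult_unit_right_tar)
  ultimately show ?thesis
    using assms(3,4) by (simp add: algebra_def)
qed

lemma centralizes_unit:
  assumes "\<phi> \<in> hom D S A"
  shows "centralizes D m S \<phi> (unit D) u"
  using assms by (simp add: centralizes_def hom_def mult_unit_left_tar mult_unit_right_tar)

lemma centralizes_mult: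
  assumes "\<phi> \<in> hom D S A"
    and "\<gamma> \<in> hom D C A" "centralizes D m S \<phi> C \<gamma>"
    and "\<delta> \<in> hom D C' A" "centralizes D m S \<phi> C' \<delta>"
  shows "centralizes D m S \<phi> (tob D C C') (comp D m (tar D \<gamma> \<delta>))"
proof -
  have [simp]: "\<phi> \<in> Arr D" "dom D \<phi> = S" "cod D \<phi> = A"
    "\<gamma> \<in> Arr D" "dom D \<gamma> = C" "cod D \<gamma> = A"
    "\<delta> \<in> Arr D" "dom D \<delta> = C'" "cod D \<delta> = A"
    using assms(1,2,4) by (simp_all add: hom_def)
  let ?\<Psi> = "braid D C S" and ?\<Psi>' = "braid D C' S" and ?\<Psi>\<^sub>C\<^sub>C' = "braid D (tob D C C') S"
  let ?h = "tar D (idm D C) ?\<Psi>'"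
  have \<gamma>_cent: "comp D m (tar D \<gamma> \<phi>) = comp D m (comp D (tar D \<phi> \<gamma>) ?\<Psi>)"
    and \<delta>_cent: "comp D m (tar D \<delta> \<phi>) = comp D m (comp D (tar D \<phi> \<delta>) ?\<Psi>')"
    using assms(3,5) by (simp_all add: centralizes_def)
  have assoc_\<gamma>\<phi>\<delta>:
      "comp D m (tar D \<gamma> (comp D m (tar D \<phi> \<delta>))) = comp D m (tar D (comp D m (tar D \<gamma> \<phi>)) \<delta>)"
    and assoc_\<phi>\<gamma>\<delta>:
      "comp D m (tar D (comp D m (tar D \<phi> \<gamma>)) \<delta>) = comp D m (tar D \<phi> (comp D m (tar D \<gamma> \<delta>)))"
    by (simp_all add: mult_assoc_tar)
  have "comp D m (tar D (comp D m (tar D \<gamma> \<delta>)) \<phi>) =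
      comp D m (tar D \<gamma> (comp D m (tar D \<delta> \<phi>)))"
    by (simp add: mult_assoc_tar)
  also have "\<dots> = comp D m (tar D \<gamma> (comp D m (comp D (tar D \<phi> \<delta>) ?\<Psi>')))"
    by (simp only: \<delta>_cent)
  also have "\<dots> = comp D m (comp D (tar D \<gamma> (comp D m (tar D \<phi> \<delta>))) ?h)"
    using interchange[of "idm D C" \<gamma> ?\<Psi>' "comp D m (tar D \<phi> \<delta>)"] by simp
  also have "\<dots> = comp D m (comp D (tar D (comp D m (tar D \<gamma> \<phi>)) \<delta>) ?h)"
    using comp_eq_precomp[OF assoc_\<gamma>\<phi>\<delta>, where h = ?h] by simp
  also have "\<dots> = comp D m (comp D (tar D (comp D m (comp D (tar D \<phi> \<gamma>) ?\<Psi>)) \<delta>) ?h)"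
    by (simp only: \<gamma>_cent)
  also have "\<dots> =
      comp D m (comp D (tar D (comp D m (tar D \<phi> \<gamma>)) \<delta>) (comp D (tar D ?\<Psi> (idm D C')) ?h))"
    using interchange[of ?\<Psi> "comp D m (tar D \<phi> \<gamma>)" "idm D C'" \<delta>] by simp
  also have "\<dots> = comp D m (comp D (tar D (comp D m (tar D \<phi> \<gamma>)) \<delta>) ?\<Psi>\<^sub>C\<^sub>C')"
    by (simp add: braid_tob_left)
  also have "\<dots> = comp D m (comp D (tar D \<phi> (comp D m (tar D \<gamma> \<delta>))) ?\<Psi>\<^sub>C\<^sub>C')"
    using comp_eq_precomp[OF assoc_\<phi>\<gamma>\<delta>, where h = ?\<Psi>\<^sub>C\<^sub>C'] by simp
  finally show ?thesis
    by (simp add: centralizes_def)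
qed

lemma left_centralizer_algebra:
  assumes "\<phi> \<in> hom D S A" "is_left_centralizer D A m S \<phi> Z \<zeta>"
  shows "\<exists>mZ uZ. algebra D Z mZ uZ \<and> algebra_mor D Z mZ uZ A m u \<zeta>"
proof -
  have \<zeta>: "\<zeta> \<in> hom D Z A" "centralizes D m S \<phi> Z \<zeta>"
    using assms(2) by (simp_all add: is_left_centralizer_def)
  have factor: "\<exists>f. f \<in> hom D C Z \<and> comp D \<zeta> f = \<gamma>"
    if "\<gamma> \<in> hom D C A" "centralizes D m S \<phi> C \<gamma>" for C \<gamma>
    using assms(2) that unfolding is_left_centralizer_def by blast
  have "comp D m (tar D \<zeta> \<zeta>) \<in> hom D (tob D Z Z) A"
    using \<zeta>(1) by (simp add: hom_def)
  then obtain mZ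
    where mZ: "mZ \<in> hom D (tob D Z Z) Z" "comp D \<zeta> mZ = comp D m (tar D \<zeta> \<zeta>)"
    using factor centralizes_mult[OF assms(1) \<zeta> \<zeta>] by blast
  have "u \<in> hom D (unit D) A"
    by (simp add: hom_def)
  then obtain uZ where uZ: "uZ \<in> hom D (unit D) Z" "comp D \<zeta> uZ = u"
    using factor centralizes_unit[OF assms(1)] by blast
  have "algebra_mor D Z mZ uZ A m u \<zeta>"
    using \<zeta>(1) mZ(2) uZ(2) by (simp add: algebra_mor_def)
  moreover have "monic D \<zeta>"
    using left_centralizer_monic[OF _ assms] by (simp add: hom_def)
  ultimately show ?thesis
    using algebra_if_monic_algebra_mor mZ(1) uZ(1) by blast
qed

end

theorem proposition2p8:
  fixes D :: "('o, 'a) bmcat"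
    and A S Z :: 'o and m u \<phi> \<zeta> :: 'a
  assumes "braided_monoidal_cat D"
    and "algebra D A m u"
    and "\<phi> \<in> hom D S A"
    and "is_left_centralizer D A m S \<phi> Z \<zeta>"
  shows "(\<exists>mZ uZ. algebra D Z mZ uZ \<and> algebra_mor D Z mZ uZ A m u \<zeta>) \<and>
         (\<forall>mZ uZ mZ' uZ'.
            algebra D Z mZ uZ \<and> algebra_mor D Z mZ uZ A m u \<zeta> \<and>
            algebra D Z mZ' uZ' \<and> algebra_mor D Z mZ' uZ' A m u \<zeta> \<longrightarrow>
            (\<exists>!f. algebra_mor D Z mZ uZ Z mZ' uZ' f \<and> iso_mor D f \<and> comp D \<zeta> f = \<zeta>))"
proof -
  interpret algebra_in D A m u
    using assms(1,2) by unfold_locales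
  have "monic D \<zeta>"
    using left_centralizer_monic[OF _ assms(3,4)] algebra by (simp add: algebra_def)
  then show ?thesis
    using left_centralizer_algebra[OF assms(3,4)] algebra_structure_unique_along_monic by blast
qed

end
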